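(* Let $(\omega_k)_k$ be formulas indexed by integers, and let $\chi,\psi$ be formulas. Suppose $(i_1,\dots,i_n)$, $(j_1,\dots,j_m)$, $(k_1,\dots,k_p)$ are strictly increasing sequences of integers with $\{k_1,\dots,k_p\}=\{i_1,\dots,i_n,j_1,\dots,j_m\}$, and that either $n=0$, or ($n>0$, $m>0$ and $i_n\le j_m$). If $\vdash_{\mathsf{BB'IW}}\omega_{i_1}\dots\omega_{i_n}\to(\chi\to\psi)$ and $\vdash_{\mathsf{BB'IW}}\omega_{j_1}\dots\omega_{j_m}\to\chi$, then $\vdash_{\mathsf{BB'IW}}\omega_{k_1}\dots\omega_{k_p}\to\psi$.
   Context: Formulas are built from propositional atoms with $\to$; $\phi_1\dots\phi_n\to\psi$ denotes $\phi_1\to(\dots(\phi_n\to\psi)\dots)$ if $n>0$ and $\psi$ if $n=0$. $\vdash_{\mathsf{BB'IW}}\phi$ means that $\phi$ is derivable by modus ponens from the axioms consisting of all instances of $(\chi\to\psi)\to((\phi\to\chi)\to(\phi\to\psi))$ (${\sf B}$), $(\phi\to\chi)\to((\chi\to\psi)\to(\phi\to\psi))$ (${\sf B'}$), $\phi\to\phi$ (${\sf I}$), $(\phi\to(\phi\to\chi))\to(\phi\to\chi)$ (${\sf W}$); equivalently, some combinator over the basis ${\sf B},{\sf B'},{\sf I},{\sf W}$ has type $\phi$. *)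

theory Defs
  imports Main
begin

datatype 'a form = Atom 'a | Imp "'a form" "'a form" (infixr "\<rightarrow>" 25)

inductive BBIW :: "'a form \<Rightarrow> bool" where
  axB:  "BBIW ((\<chi> \<rightarrow> \<psi>) \<rightarrow> ((\<phi> \<rightarrow> \<chi>) \<rightarrow> (\<phi> \<rightarrow> \<psi>)))"
| axB': "BBIW ((\<phi> \<rightarrow> \<chi>) \<rightarrow> ((\<chi> \<rightarrow> \<psi>) \<rightarrow> (\<phi> \<rightarrow> \<psi>)))"
| axI:  "BBIW (\<phi> \<rightarrow> \<phi>)"
| axW:  "BBIW ((\<phi> \<rightarrow> (\<phi> \<rightarrow> \<chi>)) \<rightarrow> (\<phi> \<rightarrow> \<chi>))"
| mp:   "BBIW (\<phi> \<rightarrow> \<psi>) \<Longrightarrow> BBIW \<phi> \<Longrightarrow> BBIW \<psi>"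

definition imps :: "'a form list \<Rightarrow> 'a form \<Rightarrow> 'a form" where
  "imps \<phi>s \<psi> = foldr Imp \<phi>s \<psi>"

end

theory Submission
  imports Defs
begin

text \<open>Without the permutation combinator C, premises cannot be reordered freely. What survives is
this: if \<alpha> \<rightarrow> \<beta> \<rightarrow> \<gamma> and \<beta> \<rightarrow> \<alpha> \<rightarrow> \<gamma> are both derivable, then the premise lists of
derivable \<omega>_I \<rightarrow> \<alpha> and \<omega>_J \<rightarrow> \<beta> can be merged along their sorted index sequences, by
induction on the largest index: B and B' move a premise \<omega>_z in front of either side, and W
contracts it when it occurs on both. For the theorem take \<alpha> = \<chi> \<rightarrow> \<psi>, \<beta> = \<omega>_z \<rightarrow> \<chi> and
\<gamma> = \<omega>_z \<rightarrow> \<psi>, where z is the largest index of the second sequence; B and B' give the two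
required orders, and the hypothesis i_n \<le> j_m guarantees that \<omega>_z is the last premise of the result.\<close>

lemma imps_Nil [simp]: "imps [] \<psi> = \<psi>"
  by (simp add: imps_def)

lemma imps_Cons [simp]: "imps (\<phi> # \<phi>s) \<psi> = (\<phi> \<rightarrow> imps \<phi>s \<psi>)"
  by (simp add: imps_def)

lemma imps_append [simp]: "imps (\<phi>s @ \<phi>s') \<psi> = imps \<phi>s (imps \<phi>s' \<psi>)"
  by (simp add: imps_def)

lemma BBIW_trans: "BBIW (\<phi> \<rightarrow> \<chi>) \<Longrightarrow> BBIW (\<chi> \<rightarrow> \<psi>) \<Longrightarrow> BBIW (\<phi> \<rightarrow> \<psi>)"
  by (meson BBIW.axB' BBIW.mp)

lemma BBIW_imps_mono: "BBIW (\<chi> \<rightarrow> \<psi>) \<Longrightarrow> BBIW (imps \<phi>s \<chi> \<rightarrow> imps \<phi>s \<psi>)"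
proof (induction \<phi>s)
  case (Cons \<phi> \<phi>s)
  then show ?case
    using BBIW.mp[OF BBIW.axB] by simp
qed simp

lemma BBIW_imps_mp: "BBIW (\<chi> \<rightarrow> \<psi>) \<Longrightarrow> BBIW (imps \<phi>s \<chi>) \<Longrightarrow> BBIW (imps \<phi>s \<psi>)"
  using BBIW_imps_mono BBIW.mp by blast

lemma BBIW_imps_contract: "BBIW (imps \<phi>s (\<phi> \<rightarrow> \<phi> \<rightarrow> \<psi>)) \<Longrightarrow> BBIW (imps \<phi>s (\<phi> \<rightarrow> \<psi>))"
  by (rule BBIW_imps_mp[OF BBIW.axW])

definition interchangeable :: "'a form \<Rightarrow> 'a form \<Rightarrow> 'a form \<Rightarrow> bool" where
  "interchangeable \<alpha> \<beta> \<gamma> \<longleftrightarrow> BBIW (\<alpha> \<rightarrow> \<beta> \<rightarrow> \<gamma>) \<and> BBIW (\<beta> \<rightarrow> \<alpha> \<rightarrow> \<gamma>)"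

lemma interchangeable_sym: "interchangeable \<alpha> \<beta> \<gamma> \<Longrightarrow> interchangeable \<beta> \<alpha> \<gamma>"
  by (simp add: interchangeable_def)

lemma interchangeable_prefix_left:
  assumes "interchangeable \<alpha> \<beta> \<gamma>"
  shows "interchangeable (\<phi> \<rightarrow> \<alpha>) \<beta> (\<phi> \<rightarrow> \<gamma>)"
proof -
  have h: "BBIW (\<beta> \<rightarrow> \<alpha> \<rightarrow> \<gamma>)"
    using assms by (simp add: interchangeable_def)
  have swapped: "BBIW (\<beta> \<rightarrow> (\<phi> \<rightarrow> \<alpha>) \<rightarrow> (\<phi> \<rightarrow> \<gamma>))"
    using BBIW_trans[OF h BBIW.axB] .
  have "BBIW (((\<alpha> \<rightarrow> \<gamma>) \<rightarrow> (\<phi> \<rightarrow> \<gamma>)) \<rightarrow> \<beta> \<rightarrow> (\<phi> \<rightarrow> \<gamma>))"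
    using BBIW.mp[OF BBIW.axB' h] .
  then have "BBIW ((\<phi> \<rightarrow> \<alpha>) \<rightarrow> \<beta> \<rightarrow> (\<phi> \<rightarrow> \<gamma>))"
    by (rule BBIW_trans[OF BBIW.axB'])
  with swapped show ?thesis
    by (simp add: interchangeable_def)
qed

lemma interchangeable_prefix_right:
  "interchangeable \<alpha> \<beta> \<gamma> \<Longrightarrow> interchangeable \<alpha> (\<phi> \<rightarrow> \<beta>) (\<phi> \<rightarrow> \<gamma>)"
  by (rule interchangeable_sym[OF interchangeable_prefix_left[OF interchangeable_sym]])

lemma interchangeable_prefix_both:
  assumes "interchangeable \<alpha> \<beta> \<gamma>"
  shows "interchangeable (\<phi> \<rightarrow> \<alpha>) (\<phi> \<rightarrow> \<beta>) (\<phi> \<rightarrow> \<phi> \<rightarrow> \<gamma>)"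
proof -
  have prefixed: "BBIW ((\<phi> \<rightarrow> b) \<rightarrow> (\<phi> \<rightarrow> a) \<rightarrow> (\<phi> \<rightarrow> \<phi> \<rightarrow> c))"
    if h: "BBIW (a \<rightarrow> b \<rightarrow> c)" for a b c
  proof -
    have lift_a: "BBIW ((\<phi> \<rightarrow> a) \<rightarrow> (\<phi> \<rightarrow> b \<rightarrow> c))"
      using BBIW_imps_mono[OF h, of "[\<phi>]"] by simp
    have "BBIW ((\<phi> \<rightarrow> b) \<rightarrow> (\<phi> \<rightarrow> b \<rightarrow> c) \<rightarrow> (\<phi> \<rightarrow> \<phi> \<rightarrow> c))"
      using BBIW_trans[OF BBIW.axB' BBIW.axB] .
    moreover have "BBIW (((\<phi> \<rightarrow> b \<rightarrow> c) \<rightarrow> (\<phi> \<rightarrow> \<phi> \<rightarrow> c)) \<rightarrow> ((\<phi> \<rightarrow> a) \<rightarrow> (\<phi> \<rightarrow> \<phi> \<rightarrow> c)))"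
      using BBIW.mp[OF BBIW.axB' lift_a] .
    ultimately show ?thesis
      by (rule BBIW_trans)
  qed
  from assms have "BBIW (\<alpha> \<rightarrow> \<beta> \<rightarrow> \<gamma>)" "BBIW (\<beta> \<rightarrow> \<alpha> \<rightarrow> \<gamma>)"
    by (simp_all add: interchangeable_def)
  then show ?thesis
    unfolding interchangeable_def using prefixed by blast
qed

lemma sorted_less_snoc_Max:
  fixes xs :: "'i::linorder list"
  assumes "sorted_wrt (<) xs" and "z \<in> set xs" and "\<forall>x\<in>set xs. x \<le> z"
  obtains ys where "xs = ys @ [z]" and "sorted_wrt (<) ys" and "set ys = set xs - {z}"
proof -
  obtain ys l where xs: "xs = ys @ [l]"
    using assms(2) by (cases xs rule: rev_exhaust) auto
  have less: "\<forall>y\<in>set ys. y < l" and "sorted_wrt (<) ys"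
    using assms(1) xs by (auto simp: sorted_wrt_append)
  moreover have "l = z"
    using assms(2,3) xs less by fastforce
  ultimately show ?thesis
    using that xs by auto
qed

lemma sorted_less_le_last:
  fixes xs :: "'i::linorder list"
  assumes "sorted_wrt (<) xs" and "x \<in> set xs"
  shows "x \<le> last xs"
  using assms by (cases xs rule: rev_exhaust) (auto simp: sorted_wrt_append)

lemma BBIW_imps_merge:
  fixes \<omega> :: "'i::linorder \<Rightarrow> 'a form"
  assumes "sorted_wrt (<) ks" and "sorted_wrt (<) is" and "sorted_wrt (<) js"
    and "set ks = set is \<union> set js"
    and "interchangeable \<alpha> \<beta> \<gamma>"
    and "BBIW (imps (map \<omega> is) \<alpha>)" and "BBIW (imps (map \<omega> js) \<beta>)"
  shows "BBIW (imps (map \<omega> ks) \<gamma>)"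
  using assms
proof (induction ks arbitrary: "is" js \<alpha> \<beta> \<gamma> rule: rev_induct)
  case Nil
  then have "BBIW \<alpha>" "BBIW \<beta>" "BBIW (\<alpha> \<rightarrow> \<beta> \<rightarrow> \<gamma>)"
    by (simp_all add: interchangeable_def)
  then have "BBIW \<gamma>"
    by (meson BBIW.mp)
  then show ?case
    by simp
next
  case (snoc z ks)
  have ks: "sorted_wrt (<) ks" "set ks = set is \<union> set js - {z}"
    using snoc.prems(1,4) by (auto simp: sorted_wrt_append)
  have "\<forall>x\<in>set is. x \<le> z" "\<forall>x\<in>set js. x \<le> z"
    using sorted_less_le_last[OF snoc.prems(1)] snoc.prems(4) by auto
  note split_is = sorted_less_snoc_Max[OF snoc.prems(2) _ this(1)]
    and split_js = sorted_less_snoc_Max[OF snoc.prems(3) _ this(2)]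
  have "BBIW (imps (map \<omega> ks) (\<omega> z \<rightarrow> \<gamma>))"
  proof -
    consider "z \<in> set is" "z \<in> set js" | "z \<in> set is" "z \<notin> set js" | "z \<notin> set is" "z \<in> set js"
      using snoc.prems(4) by auto
    then show ?thesis
    proof cases
      case 1
      with split_is split_js obtain is' js'
        where is': "is = is' @ [z]" "sorted_wrt (<) is'" "set is' = set is - {z}"
          and js': "js = js' @ [z]" "sorted_wrt (<) js'" "set js' = set js - {z}"
        by metis
      have "BBIW (imps (map \<omega> ks) (\<omega> z \<rightarrow> \<omega> z \<rightarrow> \<gamma>))"
        by (rule snoc.IH[OF ks(1) is'(2) js'(2) _ interchangeable_prefix_both[OF snoc.prems(5)]])
          (use ks(2) is'(3) js'(3) in blast, use snoc.prems(6) is'(1) in simp,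
           use snoc.prems(7) js'(1) in simp)
      then show ?thesis
        by (rule BBIW_imps_contract)
    next
      case 2
      with split_is obtain is'
        where is': "is = is' @ [z]" "sorted_wrt (<) is'" "set is' = set is - {z}"
        by metis
      show ?thesis
        by (rule snoc.IH[OF ks(1) is'(2) snoc.prems(3) _ interchangeable_prefix_left[OF snoc.prems(5)]])
          (use 2 ks(2) is'(3) in blast, use snoc.prems(6) is'(1) in simp, fact snoc.prems(7))
    next
      case 3
      with split_js obtain js'
        where js': "js = js' @ [z]" "sorted_wrt (<) js'" "set js' = set js - {z}"
        by metis
      show ?thesis
        by (rule snoc.IH[OF ks(1) snoc.prems(2) js'(2) _ interchangeable_prefix_right[OF snoc.prems(5)]])
          (use 3 ks(2) js'(3) in blast, fact snoc.prems(6), use snoc.prems(7) js'(1) in simp)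
    qed
  qed
  then show ?case
    by simp
qed

lemma BBIW_imps_mp_merge:
  fixes \<omega> :: "'i::linorder \<Rightarrow> 'a form"
  assumes "sorted_wrt (<) (ks @ [z])" and "sorted_wrt (<) is" and "sorted_wrt (<) (js @ [z])"
    and "set (ks @ [z]) = set is \<union> set (js @ [z])"
    and "BBIW (imps (map \<omega> is) (\<chi> \<rightarrow> \<psi>))" and "BBIW (imps (map \<omega> js) (\<omega> z \<rightarrow> \<chi>))"
  shows "BBIW (imps (map \<omega> ks) (\<omega> z \<rightarrow> \<psi>))"
proof -
  have sorted: "sorted_wrt (<) ks" "sorted_wrt (<) js" and z_notin: "z \<notin> set ks" "z \<notin> set js"
    using assms(1,3) by (auto simp: sorted_wrt_append)
  have swap: "interchangeable (\<chi> \<rightarrow> \<psi>) (\<omega> z \<rightarrow> \<chi>) (\<omega> z \<rightarrow> \<psi>)"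
    by (simp add: interchangeable_def BBIW.axB BBIW.axB')
  show ?thesis
  proof (cases "z \<in> set is")
    case True
    have "BBIW (imps (map \<omega> (ks @ [z])) (\<omega> z \<rightarrow> \<psi>))"
      by (rule BBIW_imps_merge[OF assms(1,2) sorted(2) _ swap assms(5,6)])
        (use assms(4) True in auto)
    then have "BBIW (imps (map \<omega> ks) (\<omega> z \<rightarrow> \<omega> z \<rightarrow> \<psi>))"
      by simp
    then show ?thesis
      by (rule BBIW_imps_contract)
  next
    case False
    show ?thesis
      by (rule BBIW_imps_merge[OF sorted(1) assms(2) sorted(2) _ swap assms(5,6)])
        (use assms(4) False z_notin in auto)
  qed
qed

theorem lemma1p9:
  fixes \<omega> :: "int \<Rightarrow> 'a form" and \<chi> \<psi> :: "'a form"
    and ii jj kk :: "int list"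
  assumes "sorted_wrt (<) ii" and "sorted_wrt (<) jj" and "sorted_wrt (<) kk"
    and "set kk = set ii \<union> set jj"
    and "ii = [] \<or> (ii \<noteq> [] \<and> jj \<noteq> [] \<and> last ii \<le> last jj)"
    and "BBIW (imps (map \<omega> ii) (\<chi> \<rightarrow> \<psi>))"
    and "BBIW (imps (map \<omega> jj) \<chi>)"
  shows "BBIW (imps (map \<omega> kk) \<psi>)"
proof (cases "jj = []")
  case True
  with assms(4,5) have "ii = []" "kk = []"
    by auto
  with True assms(6,7) have "BBIW (\<chi> \<rightarrow> \<psi>)" "BBIW \<chi>"
    by simp_all
  then have "BBIW \<psi>"
    by (rule BBIW.mp)
  with \<open>kk = []\<close> show ?thesis
    by simp
next
  case False
  define z where "z = last jj"
  have le_jj: "\<forall>j\<in>set jj. j \<le> z"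
    using sorted_less_le_last[OF assms(2)] unfolding z_def by blast
  have le_ii: "\<forall>i\<in>set ii. i \<le> z"
  proof
    fix i
    assume i: "i \<in> set ii"
    with assms(5) have "last ii \<le> z"
      unfolding z_def by auto
    with sorted_less_le_last[OF assms(1) i] show "i \<le> z"
      by simp
  qed
  have "z \<in> set jj"
    using False unfolding z_def by simp
  then obtain js where "jj = js @ [z]"
    using sorted_less_snoc_Max[OF assms(2) _ le_jj] by blast
  moreover obtain ks where "kk = ks @ [z]"
    using sorted_less_snoc_Max[OF assms(3)] assms(4) \<open>z \<in> set jj\<close> le_ii le_jj by blast
  ultimately show ?thesis
    using assms BBIW_imps_mp_merge[of ks z ii js \<omega> \<chi> \<psi>] by simp
qed

end
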